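(* Let $\vec H$ be a DAG with $k$ vertices. Then $\mathrm{dtd}(\vec H)\le\lfloor k/4\rfloor+2$.
   Context: For a DAG $\vec H$, a source is a vertex of in-degree $0$. A DAG elimination forest of a DAG $\vec H$ is defined recursively: if $\vec H$ is empty, it is the empty forest; if the underlying undirected graph of $\vec H$ is disconnected, it is the union of DAG elimination forests (trees) of its connected components; if the underlying graph is connected and $\vec H$ has exactly one source $s$, it is the single-node tree $s$; otherwise (connected, at least two sources) it is a tree whose root is an arbitrarily chosen source $s$ of $\vec H$ and whose subtrees are the trees of a DAG elimination forest of the DAG obtained from $\vec H$ by deleting $s$ and all vertices reachable from $s$. The depth of a rooted forest is the maximum number of nodes on a root-to-leaf path. $\mathrm{dtd}(\vec H)$ is the minimum depth of a DAG elimination forest of $\vec H$. *)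

theory Defs
  imports Main
begin

definition is_dag :: "'a set \<Rightarrow> 'a rel \<Rightarrow> bool" where
  "is_dag V E \<longleftrightarrow> finite V \<and> E \<subseteq> V \<times> V \<and> acyclic E"

definition induced :: "'a rel \<Rightarrow> 'a set \<Rightarrow> 'a rel" where
  "induced E W = E \<inter> (W \<times> W)"

definition und :: "'a rel \<Rightarrow> 'a set \<Rightarrow> 'a rel" where
  "und E W = induced E W \<union> (induced E W)\<inverse>"

definition und_connected :: "'a rel \<Rightarrow> 'a set \<Rightarrow> bool" where
  "und_connected E W \<longleftrightarrow> W \<noteq> {} \<and> (\<forall>x\<in>W. \<forall>y\<in>W. (x, y) \<in> (und E W)\<^sup>*)"

definition components :: "'a rel \<Rightarrow> 'a set \<Rightarrow> 'a set set" where
  "components E W = {{y \<in> W. (x, y) \<in> (und E W)\<^sup>*} | x. x \<in> W}"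

definition sources :: "'a rel \<Rightarrow> 'a set \<Rightarrow> 'a set" where
  "sources E W = {s \<in> W. \<not> (\<exists>u\<in>W. (u, s) \<in> E)}"

definition reach :: "'a rel \<Rightarrow> 'a set \<Rightarrow> 'a \<Rightarrow> 'a set" where
  "reach E W s = {v. (s, v) \<in> (induced E W)\<^sup>*}"

datatype 'a rtree = Node 'a "'a rtree list"

text \<open>Depth = maximum number of nodes on a root-to-leaf path.\<close>
fun tdepth :: "'a rtree \<Rightarrow> nat" where
  "tdepth (Node a ts) = Suc (fold max (map tdepth ts) 0)"

definition fdepth :: "'a rtree list \<Rightarrow> nat" where
  "fdepth ts = fold max (map tdepth ts) 0"

inductive elim_forest :: "'a rel \<Rightarrow> 'a set \<Rightarrow> 'a rtree list \<Rightarrow> bool"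
  and elim_tree :: "'a rel \<Rightarrow> 'a set \<Rightarrow> 'a rtree \<Rightarrow> bool"
  for E :: "'a rel" where
  empty: "elim_forest E {} []"
| disconnected: "\<lbrakk> W \<noteq> {}; \<not> und_connected E W; distinct cs; set cs = components E W;
                  list_all2 (elim_tree E) cs ts \<rbrakk> \<Longrightarrow> elim_forest E W ts"
| connected: "\<lbrakk> und_connected E W; elim_tree E W t \<rbrakk> \<Longrightarrow> elim_forest E W [t]"
| one_source: "\<lbrakk> und_connected E W; sources E W = {s} \<rbrakk> \<Longrightarrow> elim_tree E W (Node s [])"
| many_sources: "\<lbrakk> und_connected E W; s \<in> sources E W; sources E W \<noteq> {s};
                  elim_forest E (W - reach E W s) ts \<rbrakk> \<Longrightarrow> elim_tree E W (Node s ts)"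

definition dtd :: "'a set \<Rightarrow> 'a rel \<Rightarrow> nat" where
  "dtd V E = (LEAST d. \<exists>F. elim_forest E V F \<and> fdepth F = d)"

end

theory Submission
  imports Defs
begin

text \<open>
  Treat each connected component separately and induct on its number k of vertices. If some
  source reaches at least four vertices, make it the root: this costs one level and deletes at
  least four vertices. Otherwise every source reaches at most three vertices, so it links the at
  most two non-sources it reaches; these links connect all non-sources, hence there is at most one
  more non-source than there are sources, and 2n \<le> k + 1 for the number n of non-sources.
  A second induction bounds the depth by (n + 3)/2: a source reaching three vertices deletes two
  non-sources, and if every source reaches at most two vertices, all edges end in a single sink
  and depth 2 suffices. Together, the depth is at most (k + 7)/4.
\<close>

lemma fold_max_le_iff: "fold max xs a \<le> (d::nat) \<longleftrightarrow> a \<le> d \<and> (\<forall>x\<in>set xs. x \<le> d)"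
  by (induction xs arbitrary: a) auto

lemma fdepth_le: "(\<And>t. t \<in> set ts \<Longrightarrow> tdepth t \<le> d) \<Longrightarrow> fdepth ts \<le> d"
  by (simp add: fdepth_def fold_max_le_iff)

lemma card_le_Suc_card_edges_if_connected:
  assumes fin: "finite P" and conn: "\<And>x y. x \<in> T \<Longrightarrow> y \<in> T \<Longrightarrow> (x, y) \<in> (P \<union> P\<inverse>)\<^sup>*"
  shows "card T \<le> Suc (card P)"
proof (cases "T = {}")
  case False
  then obtain r where r: "r \<in> T" by blast
  define U where "U = P \<union> P\<inverse>"
  define d where "d t = (LEAST n. (t, r) \<in> U ^^ n)" for t
  have "\<exists>y. (t, y) \<in> U \<and> d y < d t" if t: "t \<in> T - {r}" for t
  proof -
    have "\<exists>n. (t, r) \<in> U ^^ n" using conn t r by (simp add: U_def rtrancl_power)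
    then have tr: "(t, r) \<in> U ^^ d t" unfolding d_def by (rule LeastI_ex)
    then obtain m where m: "d t = Suc m" using t by (cases "d t") auto
    then obtain y where "(t, y) \<in> U" "(y, r) \<in> U ^^ m" using tr by (metis relpow_Suc_D2)
    moreover from this(2) have "d y \<le> m" unfolding d_def by (rule Least_le)
    ultimately show ?thesis using m by auto
  qed
  then obtain nxt where nxt: "\<And>t. t \<in> T - {r} \<Longrightarrow> (t, nxt t) \<in> U \<and> d (nxt t) < d t"
    by metis
  \<comment> \<open>Every vertex but the root is charged to the edge towards a neighbour closer to the root.\<close>
  define edge where "edge t = {t, nxt t}" for t
  have "inj_on edge (T - {r})"
  proof (rule inj_onI)
    fix a b assume a: "a \<in> T - {r}" and b: "b \<in> T - {r}" and "edge a = edge b"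
    then have "a = b \<or> (a = nxt b \<and> b = nxt a)" by (auto simp: edge_def doubleton_eq_iff)
    then show "a = b" using nxt[OF a] nxt[OF b] by auto
  qed
  moreover have "edge ` (T - {r}) \<subseteq> (\<lambda>(x, y). {x, y}) ` P"
    using nxt by (force simp: edge_def U_def insert_commute)
  ultimately have "card (T - {r}) \<le> card ((\<lambda>(x, y). {x, y}) ` P)"
    using fin by (metis card_image card_mono finite_imageI)
  also have "\<dots> \<le> card P" using fin by (rule card_image_le)
  finally show ?thesis using r fin by (simp add: card_Diff_singleton_if)
qed simp

lemma card_le_2_doubleton:
  assumes "finite A" "A \<noteq> {}" "card A \<le> 2"
  obtains x y where "A = {x, y}"
proof -
  have "0 < card A" using assms by (simp add: card_gt_0_iff)
  then consider "card A = 1" | "card A = 2" using assms(3) by linarith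
  then show ?thesis
  proof cases
    case 1
    then obtain x where "A = {x}" by (auto simp: card_1_singleton_iff)
    then show ?thesis using that[of x x] by simp
  next
    case 2
    then show ?thesis using that by (auto simp: card_2_iff)
  qed
qed

lemma card_add_le_if_subset_Diff:
  assumes fin: "finite B" and A: "A \<subseteq> B - D" and D: "D \<subseteq> B"
  shows "card A + card D \<le> card B"
proof -
  have "finite A" "finite D" using A D fin by (auto intro: rev_finite_subset)
  moreover have "A \<inter> D = {}" using A by blast
  ultimately have "card A + card D = card (A \<union> D)" by (simp add: card_Un_disjoint)
  also have "\<dots> \<le> card B" using A D fin by (intro card_mono) auto
  finally show ?thesis .
qed

definition elim_tree_depth_le :: "'a rel \<Rightarrow> 'a set \<Rightarrow> nat \<Rightarrow> bool" where
  "elim_tree_depth_le E W d \<longleftrightarrow> (\<exists>t. elim_tree E W t \<and> tdepth t \<le> d)"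

lemma elim_tree_depth_le_mono:
  "elim_tree_depth_le E W d \<Longrightarrow> d \<le> d' \<Longrightarrow> elim_tree_depth_le E W d'"
  unfolding elim_tree_depth_le_def by (meson order_trans)

lemma und_subset: "und E W \<subseteq> W \<times> W"
  by (auto simp: und_def induced_def)

lemma und_rtrancl_sym: "(x, y) \<in> (und E W)\<^sup>* \<Longrightarrow> (y, x) \<in> (und E W)\<^sup>*"
  unfolding und_def by (rule symD[OF sym_rtrancl[OF sym_Un_converse]])

lemma components_subset: "C \<in> components E W \<Longrightarrow> C \<subseteq> W"
  by (auto simp: components_def)

lemma components_connected:
  assumes "C \<in> components E W"
  shows "und_connected E C"
proof -
  obtain x where x: "x \<in> W" and C: "C = {v \<in> W. (x, v) \<in> (und E W)\<^sup>*}"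
    using assms by (auto simp: components_def)
  have path: "(x, v) \<in> (und E C)\<^sup>*" if "(x, v) \<in> (und E W)\<^sup>*" for v
    using that
  proof (induction rule: rtrancl_induct)
    case (step v w)
    then have "v \<in> C" "w \<in> C" using und_subset x by (auto simp: C intro: rtrancl_into_rtrancl)
    with step have "(v, w) \<in> und E C" by (auto simp: und_def induced_def)
    with step.IH show ?case by (rule rtrancl_into_rtrancl)
  qed simp
  have "(v, w) \<in> (und E C)\<^sup>*" if "v \<in> C" "w \<in> C" for v w
  proof -
    have "(v, x) \<in> (und E C)\<^sup>*"
      using path[of v] that(1) by (auto simp: C intro: und_rtrancl_sym)
    then show ?thesis using path[of w] that(2) by (auto simp: C intro: rtrancl_trans)
  qed
  moreover have "x \<in> C" using x by (simp add: C)
  ultimately show ?thesis by (auto simp: und_connected_def)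
qed

lemma finite_components: "finite W \<Longrightarrow> finite (components E W)"
  by (simp add: components_def Setcompr_eq_image)

lemma und_connected_in_components: "und_connected E W \<Longrightarrow> W \<in> components E W"
  unfolding und_connected_def components_def by blast

lemma elim_forest_of_components:
  assumes fin: "finite W" and comps: "\<And>C. C \<in> components E W \<Longrightarrow> elim_tree_depth_le E C d"
  shows "\<exists>F. elim_forest E W F \<and> fdepth F \<le> d"
proof -
  consider "W = {}" | "und_connected E W" | "W \<noteq> {}" "\<not> und_connected E W" by blast
  then show ?thesis
  proof cases
    case 1
    have "elim_forest E {} []" by (rule elim_forest_elim_tree.empty)
    with 1 show ?thesis by (auto simp: fdepth_def)
  next
    case 2
    then obtain t where t: "elim_tree E W t" "tdepth t \<le> d"
      using comps[OF und_connected_in_components] by (auto simp: elim_tree_depth_le_def)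
    from 2 t(1) have "elim_forest E W [t]" by (rule elim_forest_elim_tree.connected)
    with t(2) show ?thesis by (auto simp: fdepth_def)
  next
    case 3
    obtain cs where cs: "set cs = components E W" "distinct cs"
      using finite_distinct_list[OF finite_components[OF fin]] by blast
    define tree where "tree C = (SOME t. elim_tree E C t \<and> tdepth t \<le> d)" for C
    have tree: "elim_tree E C (tree C) \<and> tdepth (tree C) \<le> d" if "C \<in> set cs" for C
    proof -
      have "\<exists>t. elim_tree E C t \<and> tdepth t \<le> d"
        using comps[of C] that cs(1) by (simp add: elim_tree_depth_le_def)
      then show ?thesis unfolding tree_def by (rule someI_ex)
    qed
    then have "list_all2 (elim_tree E) cs (map tree cs)"
      by (simp add: list_all2_map2 list_all2_same)
    with 3 cs have "elim_forest E W (map tree cs)" by (intro elim_forest_elim_tree.disconnected)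
    moreover have "fdepth (map tree cs) \<le> d" using tree by (intro fdepth_le) auto
    ultimately show ?thesis by blast
  qed
qed

lemma elim_tree_one_source:
  assumes "und_connected E W" "sources E W = {s}"
  shows "elim_tree_depth_le E W 1"
proof -
  have "elim_tree E W (Node s [])" using assms by (rule elim_forest_elim_tree.one_source)
  then show ?thesis unfolding elim_tree_depth_le_def by (intro exI[of _ "Node s []"]) simp
qed

lemma elim_tree_remove_reach:
  assumes "finite W" "und_connected E W" "s \<in> sources E W" "sources E W \<noteq> {s}"
    and "\<And>C. C \<in> components E (W - reach E W s) \<Longrightarrow> elim_tree_depth_le E C d"
  shows "elim_tree_depth_le E W (Suc d)"
proof -
  obtain F where F: "elim_forest E (W - reach E W s) F" "fdepth F \<le> d"
    using elim_forest_of_components[OF finite_Diff[OF assms(1)] assms(5)] by blast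
  have "elim_tree E W (Node s F)"
    using assms(2-4) F(1) by (rule elim_forest_elim_tree.many_sources)
  then show ?thesis
    unfolding elim_tree_depth_le_def using F(2) by (intro exI[of _ "Node s F"]) (simp add: fdepth_def)
qed

lemma elim_tree_edgeless:
  assumes conn: "und_connected E W" and edgeless: "induced E W = {}"
  shows "elim_tree_depth_le E W 1"
proof -
  obtain s where s: "s \<in> W" using conn by (auto simp: und_connected_def)
  have "und E W = {}" using edgeless by (simp add: und_def)
  then have "W = {s}" using conn s by (auto simp: und_connected_def)
  moreover have "sources E W = W" using edgeless by (auto simp: sources_def induced_def)
  ultimately have "sources E W = {s}" by simp
  with conn show ?thesis by (rule elim_tree_one_source)
qed

lemma reach_self: "s \<in> reach E W s"
  by (simp add: reach_def)

lemma reach_step: "v \<in> reach E W s \<Longrightarrow> (v, w) \<in> induced E W \<Longrightarrow> w \<in> reach E W s"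
  by (auto simp: reach_def intro: rtrancl_into_rtrancl)

lemma reach_subset: "s \<in> W \<Longrightarrow> reach E W s \<subseteq> W"
proof
  fix v assume s: "s \<in> W" and "v \<in> reach E W s"
  then have "(s, v) \<in> (induced E W)\<^sup>*" by (simp add: reach_def)
  then show "v \<in> W" using s by (induction rule: rtrancl_induct) (auto simp: induced_def)
qed

lemma finite_reach: "finite W \<Longrightarrow> s \<in> W \<Longrightarrow> finite (reach E W s)"
  using reach_subset finite_subset by metis

lemma reach_minus_source_subset: "reach E W s - {s} \<subseteq> W - sources E W"
proof
  fix v assume v: "v \<in> reach E W s - {s}"
  then have "(s, v) \<in> (induced E W)\<^sup>*" by (simp add: reach_def)
  with v obtain u where "(u, v) \<in> induced E W" by (auto elim: rtranclE)
  then show "v \<in> W - sources E W" by (auto simp: induced_def sources_def)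
qed

lemma nonsources_mono: "C \<subseteq> W \<Longrightarrow> C - sources E C \<subseteq> W - sources E W"
  by (auto simp: sources_def)

lemma source_out_edge:
  assumes conn: "und_connected E W" and s: "s \<in> sources E W" and many: "sources E W \<noteq> {s}"
  obtains a where "(s, a) \<in> induced E W"
proof -
  obtain x where x: "x \<in> W" "x \<noteq> s" using s many by (auto simp: sources_def)
  have "(s, x) \<in> (und E W)\<^sup>*" using conn s x(1) by (simp add: und_connected_def sources_def)
  then obtain y where "(s, y) \<in> und E W" using x(2) by (auto elim: converse_rtranclE)
  moreover have "(y, s) \<notin> induced E W" using s by (auto simp: sources_def induced_def)
  ultimately show ?thesis using that by (auto simp: und_def)
qed

lemma components_remove_reach:
  assumes fin: "finite W" and s: "s \<in> W" and C: "C \<in> components E (W - reach E W s)"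
  shows "finite C" "und_connected E C" "card C < card W"
    "card C + card (reach E W s) \<le> card W"
    "card (C - sources E C) + card (reach E W s - {s}) \<le> card (W - sources E W)"
proof -
  have CW: "C \<subseteq> W - reach E W s" using C by (rule components_subset)
  have RW: "reach E W s \<subseteq> W" using s by (rule reach_subset)
  show "finite C" using CW fin by (rule finite_subset[OF _ finite_Diff])
  show "und_connected E C" using C by (rule components_connected)
  show card_le: "card C + card (reach E W s) \<le> card W"
    using fin CW RW by (rule card_add_le_if_subset_Diff)
  have "0 < card (reach E W s)"
    using finite_reach[OF fin s] reach_self[of s E W] by (auto simp: card_gt_0_iff)
  with card_le show "card C < card W" by linarith
  have "C - sources E C \<subseteq> (W - sources E W) - (reach E W s - {s})"
    using nonsources_mono[of C W E] CW by blast
  then show "card (C - sources E C) + card (reach E W s - {s}) \<le> card (W - sources E W)"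
    using fin by (intro card_add_le_if_subset_Diff) (simp_all add: reach_minus_source_subset)
qed

lemma sources_cases:
  obtains (unique_source) s where "sources E W = {s}"
  | (large_reach) s where "s \<in> sources E W" "sources E W \<noteq> {s}" "Suc m \<le> card (reach E W s)"
  | (small_reaches) "\<And>s. sources E W \<noteq> {s}" "\<forall>s\<in>sources E W. card (reach E W s) \<le> m"
  using not_less_eq_eq by blast

context
  fixes E :: "'a rel"
  assumes acyclic_E: "acyclic E"
begin

lemma edge_not_refl: "(x, y) \<in> E \<Longrightarrow> x \<noteq> y"
  using acyclic_E r_into_trancl[of x y E] unfolding acyclic_def by blast

lemma reach_from_source:
  assumes fin: "finite W" and v: "v \<in> W"
  shows "\<exists>s\<in>sources E W. v \<in> reach E W s"
proof -
  have "finite (induced E W)" using fin by (simp add: induced_def finite_Int)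
  moreover have "acyclic (induced E W)"
    using acyclic_subset[OF acyclic_E] by (simp add: induced_def)
  ultimately have "wf (induced E W)" by (rule finite_acyclic_wf)
  then show ?thesis using v
  proof (induction v rule: wf_induct_rule)
    case (less v)
    show ?case
    proof (cases "v \<in> sources E W")
      case False
      then obtain u where u: "(u, v) \<in> induced E W" using less.prems by (auto simp: sources_def induced_def)
      then obtain s where "s \<in> sources E W" "u \<in> reach E W s" using less.IH by (auto simp: induced_def)
      with u show ?thesis by (blast intro: reach_step)
    qed (blast intro: reach_self)
  qed
qed

lemma small_reach_edge:
  assumes fin: "finite W" and small: "\<forall>s\<in>sources E W. card (reach E W s) \<le> 2"
    and xy: "(x, y) \<in> induced E W"
  shows "x \<in> sources E W" "reach E W x = {x, y}"
proof -
  have xW: "x \<in> W" and "x \<noteq> y" using xy edge_not_refl by (auto simp: induced_def)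
  obtain s where s: "s \<in> sources E W" "x \<in> reach E W s" using reach_from_source[OF fin xW] by blast
  have y: "y \<in> reach E W s" using s(2) xy by (rule reach_step)
  have "y \<noteq> s" using s(1) xy by (auto simp: sources_def induced_def)
  have "x = s"
  proof (rule ccontr)
    assume "x \<noteq> s"
    then have "card {s, x, y} = 3" using \<open>y \<noteq> s\<close> \<open>x \<noteq> y\<close> by simp
    moreover have "{s, x, y} \<subseteq> reach E W s" using reach_self s(2) y by simp
    then have "card {s, x, y} \<le> card (reach E W s)"
      using finite_reach[OF fin] s(1) by (intro card_mono) (auto simp: sources_def)
    ultimately show False using small s(1) by fastforce
  qed
  then show source: "x \<in> sources E W" using s(1) by simp
  have "{x, y} \<subseteq> reach E W x" using reach_self reach_step[OF reach_self xy] by simp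
  moreover have "card (reach E W x) \<le> card {x, y}" using small source \<open>x \<noteq> y\<close> by auto
  ultimately have "{x, y} = reach E W x" by (rule card_seteq[OF finite_reach[OF fin xW]])
  then show "reach E W x = {x, y}" ..
qed

lemma small_reach_out_edge_unique:
  assumes "finite W" "\<forall>s\<in>sources E W. card (reach E W s) \<le> 2"
    and "(w, b) \<in> induced E W" "(w, c) \<in> induced E W"
  shows "b = c"
  using small_reach_edge(2)[OF assms(1-3)] small_reach_edge(2)[OF assms(1,2,4)]
    edge_not_refl assms(3,4) by (auto simp: induced_def doubleton_eq_iff)

lemma small_reach_edge_heads_eq:
  assumes fin: "finite W" and conn: "und_connected E W"
    and small: "\<forall>s\<in>sources E W. card (reach E W s) \<le> 2"
    and xa: "(x, a) \<in> induced E W" and uv: "(u, v) \<in> induced E W"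
  shows "v = a"
proof -
  note out_unique = small_reach_out_edge_unique[OF fin small]
  have a: "a \<in> W" "a \<notin> sources E W" using xa by (auto simp: sources_def induced_def)
  define X where "X = insert a {w. (w, a) \<in> induced E W}"
  have "w \<in> X" if "(a, w) \<in> (und E W)\<^sup>*" for w
    using that
  proof (induction rule: rtrancl_induct)
    case (step w w')
    from step.hyps(2) consider "(w, w') \<in> induced E W" | "(w', w) \<in> induced E W"
      by (auto simp: und_def)
    then show ?case
    proof cases
      case 1
      then have "w \<noteq> a" using small_reach_edge(1)[OF fin small] a(2) by blast
      then have "(w, a) \<in> induced E W" using step.IH by (simp add: X_def)
      with 1 have "w' = a" by (rule out_unique)
      then show ?thesis by (simp add: X_def)
    next
      case 2
      then have "w \<notin> sources E W" by (auto simp: sources_def induced_def)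
      then have "w = a" using step.IH small_reach_edge(1)[OF fin small] by (auto simp: X_def)
      with 2 show ?thesis by (simp add: X_def)
    qed
  qed (simp add: X_def)
  moreover have "(a, u) \<in> (und E W)\<^sup>*" using conn a(1) uv by (auto simp: und_connected_def induced_def)
  ultimately have "u \<in> X" .
  moreover have "u \<noteq> a" using small_reach_edge(1)[OF fin small uv] a(2) by blast
  ultimately have "(u, a) \<in> induced E W" by (simp add: X_def)
  with uv show "v = a" by (rule out_unique)
qed

lemma reach_minus_source_doubleton:
  assumes fin: "finite W" and conn: "und_connected E W"
    and s: "s \<in> sources E W" "sources E W \<noteq> {s}" and small: "card (reach E W s) \<le> 3"
  obtains x y where "reach E W s - {s} = {x, y}"
proof -
  have sW: "s \<in> W" using s by (simp add: sources_def)
  obtain a where a: "(s, a) \<in> induced E W" using conn s by (rule source_out_edge)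
  have finR: "finite (reach E W s)" using fin sW by (rule finite_reach)
  then have "finite (reach E W s - {s})" by simp
  moreover have "a \<in> reach E W s - {s}"
    using reach_step[OF reach_self a] edge_not_refl a by (auto simp: induced_def)
  then have "reach E W s - {s} \<noteq> {}" by blast
  moreover have "card (reach E W s - {s}) \<le> 2" using small reach_self[of s E W] finR by simp
  ultimately show ?thesis using that by (rule card_le_2_doubleton)
qed

lemma nonsources_connected_through_reaches:
  assumes fin: "finite W" and conn: "und_connected E W"
    and reach_ne: "\<And>s. s \<in> sources E W \<Longrightarrow> reach E W s - {s} \<noteq> {}"
    and reach_conn: "\<And>s v w. s \<in> sources E W \<Longrightarrow> v \<in> reach E W s - {s} \<Longrightarrow>
      w \<in> reach E W s - {s} \<Longrightarrow> (v, w) \<in> U\<^sup>*"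
    and v: "v \<in> W - sources E W" and w: "w \<in> W - sources E W"
  shows "(v, w) \<in> U\<^sup>*"
proof -
  \<comment> \<open>h moves each source to a non-source it reaches; the two ends of an edge of W are then
    mapped into the reach of a single source.\<close>
  define h where "h u = (if u \<in> sources E W then (SOME v. v \<in> reach E W u - {u}) else u)" for u
  have h_edge: "(h u, h u') \<in> U\<^sup>* \<and> (h u', h u) \<in> U\<^sup>*" if uu': "(u, u') \<in> induced E W" for u u'
  proof -
    have u': "u' \<notin> sources E W" using uu' by (auto simp: sources_def induced_def)
    obtain s where s: "s \<in> sources E W" "u \<in> reach E W s" "h u \<in> reach E W s - {s}"
    proof (cases "u \<in> sources E W")
      case True
      have "(SOME v. v \<in> reach E W u - {u}) \<in> reach E W u - {u}"
        using reach_ne[OF True] by (rule some_in_eq[THEN iffD2])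
      with True have "h u \<in> reach E W u - {u}" by (simp add: h_def)
      with True show ?thesis by (intro that[of u]) (simp_all add: reach_self)
    next
      case False
      then obtain s where s: "s \<in> sources E W" "u \<in> reach E W s"
        using reach_from_source[OF fin] uu' by (auto simp: induced_def)
      moreover have "u \<noteq> s" using s(1) False by blast
      ultimately show ?thesis using False by (intro that[of s]) (simp_all add: h_def)
    qed
    moreover have "u' \<in> reach E W s - {s}" using reach_step[OF s(2) uu'] u' s(1) by auto
    ultimately show ?thesis using reach_conn u' by (simp add: h_def)
  qed
  have h_path: "(h u, h u') \<in> U\<^sup>*" if "(u, u') \<in> (und E W)\<^sup>*" for u u'
    using that
  proof (induction rule: rtrancl_induct)
    case (step u' u'')
    then have "(u', u'') \<in> induced E W \<or> (u'', u') \<in> induced E W" by (simp add: und_def)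
    then have "(h u', h u'') \<in> U\<^sup>*" using h_edge by blast
    with step.IH show ?case by (rule rtrancl_trans)
  qed simp
  have "(v, w) \<in> (und E W)\<^sup>*" using conn v w by (simp add: und_connected_def)
  from h_path[OF this] show ?thesis using v w by (simp add: h_def)
qed

lemma card_nonsources_le_Suc_card_sources:
  assumes fin: "finite W" and conn: "und_connected E W" and many: "\<And>s. sources E W \<noteq> {s}"
    and small: "\<forall>s\<in>sources E W. card (reach E W s) \<le> 3"
  shows "card (W - sources E W) \<le> Suc (card (sources E W))"
proof -
  let ?S = "sources E W"
  have "\<exists>x y. reach E W s - {s} = {x, y}" if s: "s \<in> ?S" for s
  proof -
    obtain x y where "reach E W s - {s} = {x, y}"
      by (rule reach_minus_source_doubleton[OF fin conn s many small[rule_format, OF s]])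
    then show ?thesis by blast
  qed
  then obtain x y where xy: "\<And>s. s \<in> ?S \<Longrightarrow> reach E W s - {s} = {x s, y s}" by metis
  define P where "P = (\<lambda>s. (x s, y s)) ` ?S"
  have "(v, w) \<in> (P \<union> P\<inverse>)\<^sup>*" if "v \<in> W - ?S" "w \<in> W - ?S" for v w
  proof (rule nonsources_connected_through_reaches[OF fin conn _ _ that])
    show "reach E W s - {s} \<noteq> {}" if "s \<in> ?S" for s using xy[OF that] by simp
    fix s v' w' assume s: "s \<in> ?S" and "v' \<in> reach E W s - {s}" "w' \<in> reach E W s - {s}"
    moreover have "(x s, y s) \<in> (P \<union> P\<inverse>)\<^sup>*" "(y s, x s) \<in> (P \<union> P\<inverse>)\<^sup>*"
      using s by (auto simp: P_def)
    ultimately show "(v', w') \<in> (P \<union> P\<inverse>)\<^sup>*" using xy[OF s] by auto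
  qed
  moreover have finS: "finite ?S" using fin by (simp add: sources_def)
  ultimately have "card (W - ?S) \<le> Suc (card P)"
    by (intro card_le_Suc_card_edges_if_connected) (auto simp: P_def)
  moreover have "card P \<le> card ?S" unfolding P_def using finS by (rule card_image_le)
  ultimately show ?thesis by simp
qed

lemma source_edge_exists:
  assumes fin: "finite W" and conn: "und_connected E W" and many: "\<And>s. sources E W \<noteq> {s}"
  obtains s a where "s \<in> sources E W" "(s, a) \<in> induced E W"
proof -
  obtain w where "w \<in> W" using conn by (auto simp: und_connected_def)
  then obtain s where s: "s \<in> sources E W" using reach_from_source[OF fin] by blast
  moreover obtain a where "(s, a) \<in> induced E W" using conn s many by (rule source_out_edge)
  ultimately show ?thesis by (rule that)
qed

lemma elim_tree_depth_two_if_small_reaches: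
  assumes fin: "finite W" and conn: "und_connected E W" and many: "\<And>s. sources E W \<noteq> {s}"
    and small: "\<forall>s\<in>sources E W. card (reach E W s) \<le> 2"
  shows "elim_tree_depth_le E W 2"
proof -
  obtain s a where s: "s \<in> sources E W" and a: "(s, a) \<in> induced E W"
    using fin conn many by (rule source_edge_exists)
  have a_reach: "a \<in> reach E W s" using reach_step[OF reach_self a] .
  \<comment> \<open>Every edge ends in a, which s reaches, so deleting the reach of s leaves no edges.\<close>
  have "elim_tree_depth_le E C 1" if C: "C \<in> components E (W - reach E W s)" for C
  proof (rule elim_tree_edgeless)
    show "und_connected E C" using C by (rule components_connected)
    have "C \<subseteq> W - reach E W s" using C by (rule components_subset)
    then show "induced E C = {}"
      using small_reach_edge_heads_eq[OF fin conn small a] a_reach by (auto simp: induced_def)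
  qed
  then have "elim_tree_depth_le E W (Suc 1)" by (rule elim_tree_remove_reach[OF fin conn s many])
  then show ?thesis by (simp add: numeral_2_eq_2)
qed

lemma elim_tree_depth_nonsources:
  assumes "finite W" "und_connected E W"
  shows "elim_tree_depth_le E W ((card (W - sources E W) + 3) div 2)"
  using assms
proof (induction "card W" arbitrary: W rule: less_induct)
  case less
  let ?n = "card (W - sources E W)"
  show ?case
  proof (cases rule: sources_cases[where E = E and W = W and m = 2])
    case (unique_source s)
    with less.prems(2) have "elim_tree_depth_le E W 1" by (rule elim_tree_one_source)
    then show ?thesis by (rule elim_tree_depth_le_mono) simp
  next
    case (large_reach s)
    have sW: "s \<in> W" using large_reach(1) by (simp add: sources_def)
    have "elim_tree_depth_le E C ((?n + 1) div 2)" if C: "C \<in> components E (W - reach E W s)" for C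
    proof -
      note C_facts = components_remove_reach[OF less.prems(1) sW C]
      have "2 \<le> card (reach E W s - {s})"
        using large_reach(3) reach_self[of s E W] by (simp add: card_Diff_singleton_if)
      then have "(card (C - sources E C) + 3) div 2 \<le> (?n + 1) div 2" using C_facts(5) by linarith
      with less.hyps[OF C_facts(3,1,2)] show ?thesis by (rule elim_tree_depth_le_mono)
    qed
    then have "elim_tree_depth_le E W (Suc ((?n + 1) div 2))"
      by (rule elim_tree_remove_reach[OF less.prems large_reach(1,2)])
    then show ?thesis by (rule elim_tree_depth_le_mono) linarith
  next
    case small_reaches
    obtain s a where "(s, a) \<in> induced E W"
      using less.prems small_reaches(1) by (rule source_edge_exists)
    then have "a \<in> W - sources E W" by (auto simp: sources_def induced_def)
    then have "0 < ?n" using less.prems(1) by (auto simp: card_gt_0_iff)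
    then have "2 \<le> (?n + 3) div 2" by linarith
    with elim_tree_depth_two_if_small_reaches[OF less.prems small_reaches]
    show ?thesis by (rule elim_tree_depth_le_mono)
  qed
qed

lemma elim_tree_depth_quarter:
  assumes "finite W" "und_connected E W"
  shows "elim_tree_depth_le E W ((card W + 8) div 4)"
  using assms
proof (induction "card W" arbitrary: W rule: less_induct)
  case less
  show ?case
  proof (cases rule: sources_cases[where E = E and W = W and m = 3])
    case (unique_source s)
    with less.prems(2) have "elim_tree_depth_le E W 1" by (rule elim_tree_one_source)
    then show ?thesis by (rule elim_tree_depth_le_mono) simp
  next
    case (large_reach s)
    have sW: "s \<in> W" using large_reach(1) by (simp add: sources_def)
    have "elim_tree_depth_le E C ((card W + 4) div 4)" if C: "C \<in> components E (W - reach E W s)" for C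
    proof -
      note C_facts = components_remove_reach[OF less.prems(1) sW C]
      have "(card C + 8) div 4 \<le> (card W + 4) div 4" using C_facts(4) large_reach(3) by linarith
      with less.hyps[OF C_facts(3,1,2)] show ?thesis by (rule elim_tree_depth_le_mono)
    qed
    then have "elim_tree_depth_le E W (Suc ((card W + 4) div 4))"
      by (rule elim_tree_remove_reach[OF less.prems large_reach(1,2)])
    then show ?thesis by (rule elim_tree_depth_le_mono) linarith
  next
    case small_reaches
    have "card (W - sources E W) \<le> Suc (card (sources E W))"
      using less.prems small_reaches by (rule card_nonsources_le_Suc_card_sources)
    moreover have "card (W - sources E W) + card (sources E W) \<le> card W"
      using less.prems(1) by (rule card_add_le_if_subset_Diff) (auto simp: sources_def)
    ultimately have "(card (W - sources E W) + 3) div 2 \<le> (card W + 8) div 4" by linarith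
    with elim_tree_depth_nonsources[OF less.prems] show ?thesis by (rule elim_tree_depth_le_mono)
  qed
qed

end

theorem mainTheorem9:
  fixes V :: "'a set" and E :: "'a rel" and k :: nat
  assumes "is_dag V E" and "card V = k"
  shows "dtd V E \<le> k div 4 + 2"
proof -
  have fin: "finite V" and acyclic: "acyclic E" using assms(1) by (simp_all add: is_dag_def)
  have "elim_tree_depth_le E C (k div 4 + 2)" if C: "C \<in> components E V" for C
  proof -
    have CV: "C \<subseteq> V" using C by (rule components_subset)
    have finC: "finite C" using CV fin by (rule finite_subset)
    have "elim_tree_depth_le E C ((card C + 8) div 4)"
      using acyclic finC components_connected[OF C] by (rule elim_tree_depth_quarter)
    moreover have "card C \<le> k" using card_mono[OF fin CV] assms(2) by simp
    then have "(card C + 8) div 4 \<le> k div 4 + 2" by linarith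
    ultimately show ?thesis by (rule elim_tree_depth_le_mono)
  qed
  then obtain F where F: "elim_forest E V F" "fdepth F \<le> k div 4 + 2"
    using elim_forest_of_components[OF fin] by blast
  have "dtd V E \<le> fdepth F" unfolding dtd_def using F(1) by (blast intro: Least_le)
  with F(2) show ?thesis by linarith
qed

end
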